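(* Let $p,q$ be positive integers, with all notation as in the context (in particular $e_s$, $T_e$, $N_{T_c,e}$). Then for every positive integer $e$ and every positive integer $T_c>T_{e_s}$, $$2N_{T_c,e}=N_{2T_c,e+1}.$$
   Context: Let $\mathbf{C}=\begin{bmatrix}1 & p\\ q & 1+pq\end{bmatrix}$. The Cat map over $\mathbb{Z}_{2^e}$ is the bijection $v\mapsto \mathbf{C}v\bmod 2^e$ of $\mathbb{Z}_{2^e}^2$; a cycle of length $n$ is an orbit of a point $v$ for which $n$ is the least positive integer with $\mathbf{C}^n v\equiv v\pmod{2^e}$. $N_{T_c,e}$ denotes the number of cycles of length $T_c$ of the Cat map over $\mathbb{Z}_{2^e}$, and $T_e$ denotes its least period (least $n\ge1$ with $\mathbf{C}^n\equiv I\pmod{2^e}$). Put $A=pq+2$, $B=\sqrt{A^2-4}$, $G_n=\left(\frac{A+B}{2}\right)^n+\left(\frac{A-B}{2}\right)^n$, $H_n=\frac{1}{B}\left(\left(\frac{A+B}{2}\right)^n-\left(\frac{A-B}{2}\right)^n\right)$ (integers). For a nonzero integer $m$ let $v_2(m)$ be the largest $x$ with $2^x\mid m$. Let $e_p=v_2(p)$, $e_q=v_2(q)$; $T_1=3$ if $p,q$ are both odd, $T_1=2$ if exactly one of $p,q$ is odd, $T_1=1$ if both are even; $\hat h=-1$ if $e_p+e_q=0$ and $\hat h=\min(e_p,e_q)$ otherwise; $e_{s,h}=v_2(H_{T_1})$; $m_0=1$ if $\frac12 G_{T_1}\not\equiv 1\pmod 4$ and $m_0=0$ otherwise; $e_{s,g}=v_2\left(\frac12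 G_{2^{m_0}T_1}-1\right)$; $x_0=e_{s,h}+m_0+\hat h-e_{s,g}$ if $e_{s,g}<e_{s,h}+m_0+\hat h$ and $x_0=0$ otherwise; and $e_s=e_{s,h}+m_0+\hat h+x_0$. *)

theory Defs
  imports Complex_Main
begin

(* 2x2 integer matrices as tuples (a,b,c,d) = [[a,b],[c,d]] *)
type_synonym mat2 = "int \<times> int \<times> int \<times> int"

definition mat2_mult :: "mat2 \<Rightarrow> mat2 \<Rightarrow> mat2" where
  "mat2_mult X Y = (case X of (a,b,c,d) \<Rightarrow> case Y of (a',b',c',d') \<Rightarrow>
     (a*a' + b*c', a*b' + b*d', c*a' + d*c', c*b' + d*d'))"

definition cat_mat :: "int \<Rightarrow> int \<Rightarrow> mat2" where
  "cat_mat p q = (1, p, q, 1 + p*q)"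

primrec cat_matpow :: "int \<Rightarrow> int \<Rightarrow> nat \<Rightarrow> mat2" where
  "cat_matpow p q 0 = (1,0,0,1)"
| "cat_matpow p q (Suc n) = mat2_mult (cat_mat p q) (cat_matpow p q n)"

definition mat2_cong :: "mat2 \<Rightarrow> mat2 \<Rightarrow> int \<Rightarrow> bool" where
  "mat2_cong X Y m = (case X of (a,b,c,d) \<Rightarrow> case Y of (a',b',c',d') \<Rightarrow>
     a mod m = a' mod m \<and> b mod m = b' mod m \<and> c mod m = c' mod m \<and> d mod m = d' mod m)"

definition cat_period :: "int \<Rightarrow> int \<Rightarrow> nat \<Rightarrow> nat" where
  "cat_period p q e = (LEAST n. n \<ge> 1 \<and> mat2_cong (cat_matpow p q n) (1,0,0,1) (2^e))"

definition cat_map :: "int \<Rightarrow> int \<Rightarrow> nat \<Rightarrow> int \<times> int \<Rightarrow> int \<times> int" where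
  "cat_map p q e v = (case v of (x,y) \<Rightarrow>
     ((x + p*y) mod 2^e, (q*x + (1+p*q)*y) mod 2^e))"

definition cat_space :: "nat \<Rightarrow> (int \<times> int) set" where
  "cat_space e = {0..<2^e} \<times> {0..<2^e}"

definition point_period :: "int \<Rightarrow> int \<Rightarrow> nat \<Rightarrow> int \<times> int \<Rightarrow> nat" where
  "point_period p q e v = (LEAST n. n \<ge> 1 \<and> (cat_map p q e ^^ n) v = v)"

definition cat_orbit :: "int \<Rightarrow> int \<Rightarrow> nat \<Rightarrow> int \<times> int \<Rightarrow> (int \<times> int) set" where
  "cat_orbit p q e v = {(cat_map p q e ^^ k) v | k. True}"

definition num_cycles :: "int \<Rightarrow> int \<Rightarrow> nat \<Rightarrow> nat \<Rightarrow> nat" where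
  "num_cycles p q Tc e = card {cat_orbit p q e v | v. v \<in> cat_space e \<and> point_period p q e v = Tc}"

(* 2-adic valuation of a nonzero integer *)
definition v2 :: "int \<Rightarrow> nat" where
  "v2 m = (GREATEST x. (2::int)^x dvd m)"

definition catA :: "int \<Rightarrow> int \<Rightarrow> int" where
  "catA p q = p*q + 2"

definition catB :: "int \<Rightarrow> int \<Rightarrow> real" where
  "catB p q = sqrt (of_int (catA p q)^2 - 4)"

(* G_n and H_n (integers), obtained from their real closed forms *)
definition catG :: "int \<Rightarrow> int \<Rightarrow> nat \<Rightarrow> int" where
  "catG p q n = \<lfloor>((of_int (catA p q) + catB p q)/2)^n + ((of_int (catA p q) - catB p q)/2)^n\<rfloor>"

definition catH :: "int \<Rightarrow> int \<Rightarrow> nat \<Rightarrow> int" where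
  "catH p q n = \<lfloor>(1 / catB p q) * (((of_int (catA p q) + catB p q)/2)^n - ((of_int (catA p q) - catB p q)/2)^n)\<rfloor>"

definition T1 :: "int \<Rightarrow> int \<Rightarrow> nat" where
  "T1 p q = (if odd p \<and> odd q then 3 else if odd p \<or> odd q then 2 else 1)"

definition hhat :: "int \<Rightarrow> int \<Rightarrow> int" where
  "hhat p q = (if v2 p + v2 q = 0 then -1 else int (min (v2 p) (v2 q)))"

definition e_sh :: "int \<Rightarrow> int \<Rightarrow> nat" where
  "e_sh p q = v2 (catH p q (T1 p q))"

(* G_{T_1} is even, so G/2 is the integer G div 2 *)
definition m0 :: "int \<Rightarrow> int \<Rightarrow> nat" where
  "m0 p q = (if (catG p q (T1 p q) div 2) mod 4 \<noteq> 1 then 1 else 0)"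

definition e_sg :: "int \<Rightarrow> int \<Rightarrow> nat" where
  "e_sg p q = v2 (catG p q (2^(m0 p q) * T1 p q) div 2 - 1)"

definition x0 :: "int \<Rightarrow> int \<Rightarrow> int" where
  "x0 p q = (if int (e_sg p q) < int (e_sh p q) + int (m0 p q) + hhat p q
             then int (e_sh p q) + int (m0 p q) + hhat p q - int (e_sg p q) else 0)"

definition e_s :: "int \<Rightarrow> int \<Rightarrow> int" where
  "e_s p q = int (e_sh p q) + int (m0 p q) + hhat p q + x0 p q"

end

(*
  Orbits count the points of least period T modulo 2^e as T N_{T,e}, and every point modulo 2^e
  has exactly four lifts modulo 2^(e+1). It therefore suffices that, for T_c > T_{e_s}, a vector has
  period 2 T_c modulo 2^(e+1) iff it has period T_c modulo 2^e.

  Vector periods are 1 or T_1 2^j. If the period t = 2n modulo 2^e exceeds T_{e_s}, then T_{e_s}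
  divides n, which forces tr C^n = 2 (mod 8). Hence C^n + I = 2Y with det Y odd, and
  C^(2n) - I = 2Y (C^n - I) shows that the period modulo 2^(e+1) is exactly 2t. Periods not
  exceeding T_{e_s} divide T_{e_s}, so modulo 2^(e+1) they stay at most 2 T_{e_s} < 2 T_c.
*)

theory Submission
  imports Defs "HOL-Computational_Algebra.Primes" "HOL-Combinatorics.Orbits"
begin

section \<open>Least periods and orbits\<close>

lemma dvd_of_diff_closed:
  fixes t k :: nat
  assumes "P k" and diff: "\<And>a b. P a \<Longrightarrow> P b \<Longrightarrow> b \<le> a \<Longrightarrow> P (a - b)"
    and t: "P t" "t \<ge> 1" and least: "\<And>j. 1 \<le> j \<Longrightarrow> P j \<Longrightarrow> t \<le> j"
  shows "t dvd k"
  using \<open>P k\<close>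
proof (induction k rule: less_induct)
  case (less k)
  show ?case
  proof (cases "k < t")
    case True
    with least less.prems have "\<not> 1 \<le> k" by (meson not_le)
    then have "k = 0" by simp
    then show ?thesis by simp
  next
    case False
    with diff less.prems t have "P (k - t)" by simp
    with less.IH False t have "t dvd k - t" by simp
    with False show ?thesis by (simp add: dvd_minus_self)
  qed
qed

lemma Least_pos:
  fixes k :: nat
  assumes "P k" "k \<ge> 1"
  shows "(LEAST n. n \<ge> 1 \<and> P n) \<ge> 1" "P (LEAST n. n \<ge> 1 \<and> P n)"
    "\<And>j. 1 \<le> j \<Longrightarrow> P j \<Longrightarrow> (LEAST n. n \<ge> 1 \<and> P n) \<le> j"
proof -
  have "(LEAST n. n \<ge> 1 \<and> P n) \<ge> 1 \<and> P (LEAST n. n \<ge> 1 \<and> P n)"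
    by (rule LeastI[of "\<lambda>n. n \<ge> 1 \<and> P n" k]) (use assms in simp)
  then show "(LEAST n. n \<ge> 1 \<and> P n) \<ge> 1" "P (LEAST n. n \<ge> 1 \<and> P n)" by simp_all
  show "\<And>j. 1 \<le> j \<Longrightarrow> P j \<Longrightarrow> (LEAST n. n \<ge> 1 \<and> P n) \<le> j"
    by (simp add: Least_le)
qed

definition least_period :: "('a \<Rightarrow> 'a) \<Rightarrow> 'a \<Rightarrow> nat" where
  "least_period f v = (LEAST n. n \<ge> 1 \<and> (f ^^ n) v = v)"

lemma least_period_least:
  assumes "(f ^^ n) v = v" "n > 0"
  shows "least_period f v > 0" "(f ^^ least_period f v) v = v"
    "\<And>j. 0 < j \<Longrightarrow> (f ^^ j) v = v \<Longrightarrow> least_period f v \<le> j"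
  using Least_pos[where P = "\<lambda>n. (f ^^ n) v = v", OF assms(1)] assms(2)
  unfolding least_period_def[symmetric] by auto

lemma funpow_fixed_orbit:
  assumes "(f ^^ n) v = v" "w \<in> orbit f v" shows "(f ^^ n) w = w"
proof -
  obtain k where w: "w = (f ^^ k) v" using assms(2) by (auto simp: orbit_altdef)
  have "(f ^^ n) w = (f ^^ k) ((f ^^ n) v)" unfolding w by (metis add.commute comp_apply funpow_add)
  with assms(1) w show ?thesis by simp
qed

lemma self_in_orbit_of_funpow: "(f ^^ n) v = v \<Longrightarrow> n > 0 \<Longrightarrow> v \<in> orbit f v"
  by (auto simp: orbit_altdef intro!: exI[of _ n])

lemma orbit_eq_of_mem:
  assumes "v \<in> orbit f v" "w \<in> orbit f v" shows "orbit f w = orbit f v"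
  using assms by (blast intro: orbit_trans orbit_swap)

lemma orbits_disjoint:
  assumes "v \<in> orbit f v" "w \<in> orbit f w" "orbit f v \<noteq> orbit f w"
  shows "orbit f v \<inter> orbit f w = {}"
proof (rule ccontr)
  assume "orbit f v \<inter> orbit f w \<noteq> {}"
  then obtain z where z: "z \<in> orbit f v" "z \<in> orbit f w" by blast
  have "orbit f z = orbit f v" "orbit f z = orbit f w"
    using orbit_eq_of_mem[OF assms(1) z(1)] orbit_eq_of_mem[OF assms(2) z(2)] by simp_all
  with assms(3) show False by simp
qed

lemma orbit_subset_of_closed:
  assumes "\<And>v. v \<in> S \<Longrightarrow> f v \<in> S" "v \<in> S" shows "orbit f v \<subseteq> S"
proof
  fix w assume "w \<in> orbit f v"
  then show "w \<in> S" by induction (use assms in auto)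
qed

lemma least_period_orbit:
  assumes "(f ^^ n) v = v" "n > 0" "w \<in> orbit f v"
  shows "least_period f w = least_period f v"
proof -
  have "v \<in> orbit f v" using assms(1,2) by (rule self_in_orbit_of_funpow)
  then have "v \<in> orbit f w" using assms(3) by (rule orbit_swap)
  with assms(3) have "(f ^^ m) w = w \<longleftrightarrow> (f ^^ m) v = v" for m
    by (blast intro: funpow_fixed_orbit)
  then show ?thesis by (simp add: least_period_def)
qed

lemma card_orbit:
  assumes "(f ^^ n) v = v" "n > 0"
  shows "card (orbit f v) = least_period f v"
proof -
  define t where "t = least_period f v"
  have t: "t > 0" "(f ^^ t) v = v" "\<And>j. 0 < j \<Longrightarrow> (f ^^ j) v = v \<Longrightarrow> t \<le> j"
    using least_period_least[OF assms] by (simp_all add: t_def)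
  have "orbit f v = (\<lambda>m. (f ^^ m) v) ` {..<t}"
    using orbit_altdef_bounded[OF t(2,1)] by auto
  moreover have "inj_on (\<lambda>m. (f ^^ m) v) {..<t}"
  proof (rule inj_onI, rule ccontr)
    have no_repeat: False if "i < j" "j < t" "(f ^^ i) v = (f ^^ j) v" for i j
    proof -
      have "(f ^^ (t - j + i)) v = (f ^^ (t - j)) ((f ^^ j) v)"
        using that(3) by (simp add: funpow_add)
      also have "\<dots> = (f ^^ (t - j + j)) v" by (simp only: funpow_add o_def)
      also have "\<dots> = v" using that(2) t(2) by simp
      finally show False using t(3)[of "t - j + i"] that(1,2) by simp
    qed
    fix i j assume "i \<in> {..<t}" "j \<in> {..<t}" "(f ^^ i) v = (f ^^ j) v" "i \<noteq> j"
    then show False using no_repeat[of i j] no_repeat[of j i] by (cases "i < j") auto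
  qed
  ultimately show ?thesis by (simp add: card_image t_def)
qed

lemma card_least_period_points:
  assumes fin: "finite S" and closed: "\<And>v. v \<in> S \<Longrightarrow> f v \<in> S"
    and periodic: "\<And>v. v \<in> S \<Longrightarrow> \<exists>n>0. (f ^^ n) v = v"
  shows "t * card (orbit f ` {v \<in> S. least_period f v = t}) = card {v \<in> S. least_period f v = t}"
proof -
  define Y where "Y = {v \<in> S. least_period f v = t}"
  have self: "v \<in> orbit f v" if "v \<in> Y" for v
    using periodic[of v] that self_in_orbit_of_funpow[where f = f and v = v] by (auto simp: Y_def)
  have orbit_Y: "orbit f v \<subseteq> Y" if "v \<in> Y" for v
  proof
    fix w assume w: "w \<in> orbit f v"
    from that have v: "v \<in> S" "least_period f v = t" by (simp_all add: Y_def)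
    obtain n where n: "n > 0" "(f ^^ n) v = v" using periodic[OF v(1)] by blast
    have "least_period f w = t" using least_period_orbit[OF n(2) n(1) w] v(2) by simp
    moreover have "w \<in> S" using orbit_subset_of_closed[where f = f, OF closed v(1)] w by blast
    ultimately show "w \<in> Y" by (simp add: Y_def)
  qed
  have card: "card (orbit f v) = t" if "v \<in> Y" for v
  proof -
    from that obtain n where "n > 0" "(f ^^ n) v = v" using periodic by (auto simp: Y_def)
    with that show ?thesis using card_orbit by (auto simp: Y_def)
  qed
  have union: "\<Union>(orbit f ` Y) = Y"
  proof
    show "\<Union>(orbit f ` Y) \<subseteq> Y" using orbit_Y by blast
    show "Y \<subseteq> \<Union>(orbit f ` Y)" using self by blast
  qed
  have "finite Y" using fin by (simp add: Y_def)
  have "t * card (orbit f ` Y) = card (\<Union>(orbit f ` Y))"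
  proof (rule card_partition)
    show "finite (orbit f ` Y)" "finite (\<Union>(orbit f ` Y))" using \<open>finite Y\<close> union by simp_all
    show "\<And>c. c \<in> orbit f ` Y \<Longrightarrow> card c = t" using card by blast
    fix c1 c2 assume "c1 \<in> orbit f ` Y" "c2 \<in> orbit f ` Y" "c1 \<noteq> c2"
    then obtain v w where "v \<in> Y" "w \<in> Y" "c1 = orbit f v" "c2 = orbit f w" by blast
    with \<open>c1 \<noteq> c2\<close> show "c1 \<inter> c2 = {}" using orbits_disjoint[OF self self] by simp
  qed
  then have "t * card (orbit f ` Y) = card Y" by (simp only: union)
  then show ?thesis by (simp add: Y_def)
qed

section \<open>Integer \<open>2 \<times> 2\<close> matrices modulo powers of 2\<close>

definition mat2_apply :: "mat2 \<Rightarrow> int \<times> int \<Rightarrow> int \<times> int" where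
  "mat2_apply X u = (case X of (a,b,c,d) \<Rightarrow> (a * fst u + b * snd u, c * fst u + d * snd u))"

definition mat2_tr :: "mat2 \<Rightarrow> int" where
  "mat2_tr X = (case X of (a,b,c,d) \<Rightarrow> a + d)"

definition mat2_det :: "mat2 \<Rightarrow> int" where
  "mat2_det X = (case X of (a,b,c,d) \<Rightarrow> a * d - b * c)"

definition vec_cong :: "int \<Rightarrow> int \<times> int \<Rightarrow> int \<times> int \<Rightarrow> bool" where
  "vec_cong m u w \<longleftrightarrow> m dvd fst u - fst w \<and> m dvd snd u - snd w"

definition fixes_mod :: "int \<Rightarrow> mat2 \<Rightarrow> int \<times> int \<Rightarrow> bool" where
  "fixes_mod m X u \<longleftrightarrow> vec_cong m (mat2_apply X u) u"

lemma mat2_apply_mult: "mat2_apply (mat2_mult X Y) u = mat2_apply X (mat2_apply Y u)"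
  by (cases X; cases Y; cases u) (simp add: mat2_apply_def mat2_mult_def algebra_simps)

lemma mat2_mult_assoc: "mat2_mult (mat2_mult X Y) Z = mat2_mult X (mat2_mult Y Z)"
  by (cases X; cases Y; cases Z) (simp add: mat2_mult_def algebra_simps)

lemma mat2_mult_id_left [simp]: "mat2_mult (1,0,0,1) X = X"
  by (cases X) (simp add: mat2_mult_def)

lemma mat2_apply_id [simp]: "mat2_apply (1,0,0,1) u = u"
  by (simp add: mat2_apply_def)

lemma mat2_det_mult: "mat2_det (mat2_mult X Y) = mat2_det X * mat2_det Y"
  by (cases X; cases Y) (simp add: mat2_det_def mat2_mult_def algebra_simps)

lemma mat2_tr_square: "mat2_tr (mat2_mult X X) = (mat2_tr X)\<^sup>2 - 2 * mat2_det X"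
  by (cases X) (simp add: mat2_tr_def mat2_det_def mat2_mult_def power2_eq_square algebra_simps)

lemma vec_cong_refl [simp]: "vec_cong m u u"
  by (simp add: vec_cong_def)

lemma vec_cong_sym: "vec_cong m u w \<Longrightarrow> vec_cong m w u"
  by (auto simp: vec_cong_def dvd_diff_commute)

lemma vec_cong_trans: "vec_cong m u w \<Longrightarrow> vec_cong m w z \<Longrightarrow> vec_cong m u z"
  unfolding vec_cong_def by (metis diff_add_cancel add_diff_eq dvd_add)

lemma vec_cong_dvd: "m dvd k \<Longrightarrow> vec_cong k u w \<Longrightarrow> vec_cong m u w"
  by (auto simp: vec_cong_def intro: dvd_trans)

lemma vec_cong_mat2_apply: "vec_cong m u w \<Longrightarrow> vec_cong m (mat2_apply X u) (mat2_apply X w)"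
proof -
  assume uw: "vec_cong m u w"
  obtain a b c d where X: "X = (a,b,c,d)" by (cases X) auto
  have "fst (mat2_apply X u) - fst (mat2_apply X w) = a * (fst u - fst w) + b * (snd u - snd w)"
    "snd (mat2_apply X u) - snd (mat2_apply X w) = c * (fst u - fst w) + d * (snd u - snd w)"
    by (simp_all add: X mat2_apply_def algebra_simps)
  with uw show ?thesis by (simp add: vec_cong_def)
qed

lemma fixes_mod_iff:
  "X = (a,b,c,d) \<Longrightarrow> u = (x,y) \<Longrightarrow>
   fixes_mod m X u \<longleftrightarrow> m dvd a*x + b*y - x \<and> m dvd c*x + d*y - y"
  by (simp add: fixes_mod_def vec_cong_def mat2_apply_def)

lemma fixes_mod_dvd: "m dvd k \<Longrightarrow> fixes_mod k X u \<Longrightarrow> fixes_mod m X u"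
  by (simp add: fixes_mod_def vec_cong_dvd)

lemma fixes_mod_vec_cong: "vec_cong m u w \<Longrightarrow> fixes_mod m X u \<longleftrightarrow> fixes_mod m X w"
  unfolding fixes_mod_def by (meson vec_cong_mat2_apply vec_cong_sym vec_cong_trans)

lemma fixes_mod_of_dvd:
  assumes "m dvd fst u" "m dvd snd u" shows "fixes_mod m X u"
proof -
  obtain a b c d where X: "X = (a,b,c,d)" by (cases X) auto
  obtain x y where u: "u = (x,y)" by (cases u) auto
  from assms have "m dvd x" "m dvd y" by (simp_all add: u)
  then show ?thesis unfolding fixes_mod_iff[OF X u] by (simp add: dvd_diff dvd_add dvd_mult)
qed

lemma mat2_cong_id_iff:
  "X = (a,b,c,d) \<Longrightarrow> mat2_cong X (1,0,0,1) m \<longleftrightarrow> m dvd a - 1 \<and> m dvd b \<and> m dvd c \<and> m dvd d - 1"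
  by (simp add: mat2_cong_def mod_eq_dvd_iff)

lemma mat2_cong_id_iff_fixes: "mat2_cong X (1,0,0,1) m \<longleftrightarrow> (\<forall>u. fixes_mod m X u)"
proof -
  obtain a b c d where X: "X = (a,b,c,d)" by (cases X) auto
  have fixes_all: "fixes_mod m X (x,y)"
    if "m dvd a - 1" "m dvd b" "m dvd c" "m dvd d - 1" for x y
  proof -
    have "a*x + b*y - x = (a - 1) * x + b * y" "c*x + d*y - y = c * x + (d - 1) * y"
      by algebra+
    moreover have "m dvd (a - 1) * x + b * y" "m dvd c * x + (d - 1) * y"
      using that by simp_all
    ultimately show ?thesis by (simp only: fixes_mod_iff[OF X refl])
  qed
  show ?thesis
  proof
    assume "mat2_cong X (1,0,0,1) m"
    then show "\<forall>u. fixes_mod m X u"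
      using fixes_all unfolding mat2_cong_id_iff[OF X] by auto
  next
    assume "\<forall>u. fixes_mod m X u"
    from this[rule_format, of "(1,0)"] this[rule_format, of "(0,1)"]
    show "mat2_cong X (1,0,0,1) m"
      by (simp add: mat2_cong_id_iff[OF X] fixes_mod_iff[OF X])
  qed
qed

text \<open>Squaring \<open>X \<equiv> I (mod 2)\<close> gains a factor 2 on a fixed vector, because
  \<open>X\<^sup>2 u - u = (X + I) (X u - u)\<close> and \<open>X + I \<equiv> 0 (mod 2)\<close>.\<close>

lemma fixes_mod_square:
  assumes X2: "mat2_cong X (1,0,0,1) 2" and fixed: "fixes_mod (2^f) X u"
  shows "fixes_mod (2 ^ Suc f) (mat2_mult X X) u"
proof -
  obtain a b c d where X: "X = (a,b,c,d)" by (cases X) auto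
  obtain x y where u: "u = (x,y)" by (cases u) auto
  define z1 where "z1 = a*x + b*y - x"
  define z2 where "z2 = c*x + d*y - y"
  have z: "2^f dvd z1" "2^f dvd z2" using fixed by (simp_all add: fixes_mod_iff[OF X u] z1_def z2_def)
  have ev: "2 dvd a + 1" "2 dvd b" "2 dvd c" "2 dvd d + 1"
    using X2 unfolding mat2_cong_id_iff[OF X] by presburger+
  have "(a*a + b*c)*x + (a*b + b*d)*y - x = (a + 1) * z1 + b * z2"
    "(c*a + d*c)*x + (c*b + d*d)*y - y = c * z1 + (d + 1) * z2"
    unfolding z1_def z2_def by algebra+
  moreover have "2 ^ Suc f dvd (a + 1) * z1 + b * z2" "2 ^ Suc f dvd c * z1 + (d + 1) * z2"
    using ev z by (simp_all add: mult_dvd_mono)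
  moreover have "mat2_mult X X = (a*a + b*c, a*b + b*d, c*a + d*c, c*b + d*d)"
    by (simp add: X mat2_mult_def)
  ultimately show ?thesis by (simp add: fixes_mod_iff[OF _ u])
qed

lemma odd_mult_pow2_dvd:
  fixes k z :: int
  assumes "odd k" "2^f dvd k * z" shows "2^f dvd z"
  using assms by (simp add: coprime_commute coprime_dvd_mult_right_iff)

text \<open>Conversely, write \<open>X + I = 2 Y\<close>; then \<open>4 det Y = det (X + I) = 2 + tr X \<equiv> 4 (mod 8)\<close>,
  so \<open>Y\<close> is invertible modulo every power of 2 and the factor 2 can be cancelled again.\<close>

lemma fixes_mod_square_cancel:
  assumes det: "mat2_det X = 1" and X2: "mat2_cong X (1,0,0,1) 2" and tr: "mat2_tr X mod 8 = 2"
    and fixed: "fixes_mod (2 ^ Suc f) (mat2_mult X X) u"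
  shows "fixes_mod (2^f) X u"
proof -
  obtain a b c d where X: "X = (a,b,c,d)" by (cases X) auto
  obtain x y where u: "u = (x,y)" by (cases u) auto
  have "2 dvd a - 1" "2 dvd b" "2 dvd c" "2 dvd d - 1"
    using X2 unfolding mat2_cong_id_iff[OF X] by auto
  then obtain \<alpha> \<beta> \<gamma> \<delta> where "a - 1 = 2*\<alpha>" "b = 2*\<beta>" "c = 2*\<gamma>" "d - 1 = 2*\<delta>"
    unfolding dvd_def by metis
  hence a: "a = 1 + 2*\<alpha>" and b: "b = 2*\<beta>" and c: "c = 2*\<gamma>" and d: "d = 1 + 2*\<delta>"
    by auto
  define P where "P = \<alpha>*\<delta> - \<beta>*\<gamma>"
  define det_Y where "det_Y = (1 + \<alpha>)*(1 + \<delta>) - \<beta>*\<gamma>"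
  have "a*d - b*c = 1" using det by (simp add: X mat2_det_def)
  hence "2*(\<alpha> + \<delta>) + 4*P = 0" unfolding a b c d P_def by algebra
  moreover have "(a + d) mod 8 = 2" using tr by (simp add: X mat2_tr_def)
  moreover have "a + d = 2 + 2*(\<alpha> + \<delta>)" by (simp add: a d)
  moreover have "det_Y = 1 + (\<alpha> + \<delta>) + P" unfolding det_Y_def P_def by algebra
  ultimately have odd_det_Y: "odd det_Y" by presburger
  define z1 where "z1 = a*x + b*y - x"
  define z2 where "z2 = c*x + d*y - y"
  define w1 where "w1 = (1 + \<alpha>)*z1 + \<beta>*z2"
  define w2 where "w2 = \<gamma>*z1 + (1 + \<delta>)*z2"
  have XX: "mat2_mult X X = (a*a + b*c, a*b + b*d, c*a + d*c, c*b + d*d)"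
    by (simp add: X mat2_mult_def)
  have "(a*a + b*c)*x + (a*b + b*d)*y - x = 2 * w1"
    "(c*a + d*c)*x + (c*b + d*d)*y - y = 2 * w2"
    unfolding w1_def w2_def z1_def z2_def a b c d by algebra+
  with fixed have "2 ^ Suc f dvd 2 * w1" "2 ^ Suc f dvd 2 * w2"
    unfolding fixes_mod_iff[OF XX u] by simp_all
  hence w: "2^f dvd w1" "2^f dvd w2" by simp_all
  have "det_Y * z1 = (1 + \<delta>)*w1 - \<beta>*w2" "det_Y * z2 = (1 + \<alpha>)*w2 - \<gamma>*w1"
    unfolding w1_def w2_def det_Y_def by algebra+
  with w have "2^f dvd det_Y * z1" "2^f dvd det_Y * z2" by simp_all
  with odd_det_Y have "2^f dvd z1" "2^f dvd z2" by (blast intro: odd_mult_pow2_dvd)+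
  thus ?thesis by (simp add: fixes_mod_iff[OF X u] z1_def z2_def)
qed

lemma mat2_tr_mod8_of_cong4:
  assumes det: "mat2_det X = 1" and X4: "mat2_cong X (1,0,0,1) 4"
  shows "mat2_tr X mod 8 = 2"
proof -
  obtain a b c d where X: "X = (a,b,c,d)" by (cases X) auto
  have "4 dvd a - 1" "4 dvd b" "4 dvd c" "4 dvd d - 1"
    using X4 unfolding mat2_cong_id_iff[OF X] by auto
  then obtain \<alpha> \<beta> \<gamma> \<delta> where "a - 1 = 4*\<alpha>" "b = 4*\<beta>" "c = 4*\<gamma>" "d - 1 = 4*\<delta>"
    unfolding dvd_def by metis
  hence a: "a = 1 + 4*\<alpha>" and b: "b = 4*\<beta>" and c: "c = 4*\<gamma>" and d: "d = 1 + 4*\<delta>"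
    by auto
  define P where "P = \<alpha>*\<delta> - \<beta>*\<gamma>"
  have "4*(\<alpha> + \<delta>) + 16*P = 0"
    using det unfolding X a b c d mat2_det_def P_def by (simp add: algebra_simps)
  moreover have "mat2_tr X = 2 + 4*(\<alpha> + \<delta>)" unfolding X a d mat2_tr_def by simp
  ultimately show ?thesis by presburger
qed

lemma fixes_mod_pow2_zero:
  assumes zero2: "\<And>w. fixes_mod 2 X w \<Longrightarrow> even (fst w) \<and> even (snd w)"
  shows "fixes_mod (2^f) X u \<Longrightarrow> 2^f dvd fst u \<and> 2^f dvd snd u"
proof (induction f arbitrary: u)
  case (Suc f)
  obtain a b c d where X: "X = (a,b,c,d)" by (cases X) auto
  have "fixes_mod 2 X u" using fixes_mod_dvd[OF _ Suc.prems] by simp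
  then obtain x y where u: "u = (2*x, 2*y)" using zero2 by (metis evenE prod.collapse)
  have eqs: "a*(2*x) + b*(2*y) - 2*x = 2*(a*x + b*y - x)" "c*(2*x) + d*(2*y) - 2*y = 2*(c*x + d*y - y)"
    by algebra+
  from Suc.prems have "2 * 2^f dvd 2*(a*x + b*y - x) \<and> 2 * 2^f dvd 2*(c*x + d*y - y)"
    unfolding fixes_mod_iff[OF X u] eqs by simp
  hence "fixes_mod (2^f) X (x,y)"
    unfolding fixes_mod_iff[OF X refl] dvd_mult_cancel_left by simp
  from Suc.IH[OF this] show ?case by (simp add: u mult_dvd_mono)
qed simp

definition vec_mod :: "int \<Rightarrow> int \<times> int \<Rightarrow> int \<times> int" where
  "vec_mod m u = (fst u mod m, snd u mod m)"

lemma vec_cong_iff_vec_mod: "vec_cong m u w \<longleftrightarrow> vec_mod m u = vec_mod m w"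
  by (simp add: vec_cong_def vec_mod_def mod_eq_dvd_iff)

lemma vec_mod_mat2_apply: "vec_mod m (mat2_apply X (vec_mod m u)) = vec_mod m (mat2_apply X u)"
proof -
  have "(a * (x mod m) + b * (y mod m)) mod m = (a * x + b * y) mod m" for a b x y :: int
    by (metis mod_add_eq mod_mult_right_eq)
  then show ?thesis by (cases X) (simp add: vec_mod_def mat2_apply_def)
qed

section \<open>Powers of the Cat matrix\<close>

lemma cat_matpow_add: "cat_matpow p q (m + n) = mat2_mult (cat_matpow p q m) (cat_matpow p q n)"
  by (induction m) (simp_all add: mat2_mult_assoc)

lemma cat_matpow_double: "cat_matpow p q (2 * n) = mat2_mult (cat_matpow p q n) (cat_matpow p q n)"
  using cat_matpow_add[of p q n n] by (simp add: mult_2)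

lemma det_cat_matpow: "mat2_det (cat_matpow p q n) = 1"
proof (induction n)
  case (Suc n)
  have "mat2_det (cat_mat p q) = 1" by (simp add: mat2_det_def cat_mat_def algebra_simps)
  with Suc show ?case by (simp add: mat2_det_mult)
qed (simp add: mat2_det_def)

lemma tr_cat_matpow_double: "mat2_tr (cat_matpow p q (2 * n)) = (mat2_tr (cat_matpow p q n))\<^sup>2 - 2"
  by (simp add: cat_matpow_double mat2_tr_square det_cat_matpow)

lemma tr_cat_matpow_double_mod8:
  assumes "mat2_tr (cat_matpow p q n) mod 8 = 2"
  shows "mat2_tr (cat_matpow p q (n * 2^k)) mod 8 = 2"
proof (induction k)
  case (Suc k)
  obtain j where "mat2_tr (cat_matpow p q (n * 2^k)) = 8*j + 2"
    using Suc by (metis mod_div_mult_eq add.commute mult.commute)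
  moreover have "n * 2 ^ Suc k = 2 * (n * 2^k)" by simp
  moreover define i where "i = 8*j*j + 4*j"
  ultimately have "mat2_tr (cat_matpow p q (n * 2 ^ Suc k)) = 8*i + 2"
    by (simp only: tr_cat_matpow_double) (simp add: power2_eq_square algebra_simps)
  then show ?case by simp
qed (use assms in simp)

lemma cat_matpow_1: "cat_matpow p q 1 = (1, p, q, 1 + p*q)"
  by (simp add: cat_mat_def mat2_mult_def)

lemma cat_matpow_2: "cat_matpow p q 2 = (1 + p*q, p*(2 + p*q), q*(2 + p*q), 1 + p*q*(3 + p*q))"
  by (simp add: cat_mat_def mat2_mult_def numeral_2_eq_2 algebra_simps)

lemma cat_matpow_3:
  "cat_matpow p q 3 = (1 + (3 + p*q)*(p*q), (3 + p*q)*((p*q + 1)*p), (3 + p*q)*((p*q + 1)*q),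
     1 + (3 + p*q)*((p*q + 1)*(1 + p*q) - 1))"
proof -
  have "cat_matpow p q 3 = mat2_mult (cat_mat p q) (cat_matpow p q 2)"
    by (simp add: numeral_3_eq_3 numeral_2_eq_2)
  then show ?thesis by (simp add: cat_matpow_2 cat_mat_def mat2_mult_def algebra_simps)
qed

lemma fixes_mod_cat_matpow_add:
  assumes a: "fixes_mod m (cat_matpow p q a) u" and b: "fixes_mod m (cat_matpow p q b) u"
  shows "fixes_mod m (cat_matpow p q (a + b)) u"
proof -
  have "vec_cong m (mat2_apply (cat_matpow p q a) (mat2_apply (cat_matpow p q b) u))
                   (mat2_apply (cat_matpow p q a) u)"
    using b unfolding fixes_mod_def by (rule vec_cong_mat2_apply)
  moreover have "vec_cong m (mat2_apply (cat_matpow p q a) u) u"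
    using a unfolding fixes_mod_def .
  ultimately show ?thesis
    unfolding fixes_mod_def cat_matpow_add mat2_apply_mult by (rule vec_cong_trans)
qed

lemma fixes_mod_cat_matpow_diff:
  assumes a: "fixes_mod m (cat_matpow p q a) u" and b: "fixes_mod m (cat_matpow p q b) u"
    and "b \<le> a"
  shows "fixes_mod m (cat_matpow p q (a - b)) u"
proof -
  have "cat_matpow p q a = mat2_mult (cat_matpow p q (a - b)) (cat_matpow p q b)"
    using cat_matpow_add[of p q "a - b" b] \<open>b \<le> a\<close> by simp
  then have "vec_cong m (mat2_apply (cat_matpow p q (a - b)) u) (mat2_apply (cat_matpow p q a) u)"
    using b unfolding fixes_mod_def by (simp add: mat2_apply_mult vec_cong_sym vec_cong_mat2_apply)
  moreover have "vec_cong m (mat2_apply (cat_matpow p q a) u) u"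
    using a unfolding fixes_mod_def .
  ultimately show ?thesis
    unfolding fixes_mod_def by (rule vec_cong_trans)
qed

lemma fixes_mod_cat_matpow_mult:
  "fixes_mod m (cat_matpow p q a) u \<Longrightarrow> fixes_mod m (cat_matpow p q (a * k)) u"
proof (induction k)
  case 0
  then show ?case by (simp add: fixes_mod_def)
next
  case (Suc k)
  then show ?case using fixes_mod_cat_matpow_add[of m p q a u "a * k"] by (simp add: add.commute)
qed

lemma cat_cong_id_diff:
  "mat2_cong (cat_matpow p q a) (1,0,0,1) m \<Longrightarrow> mat2_cong (cat_matpow p q b) (1,0,0,1) m \<Longrightarrow> b \<le> a
   \<Longrightarrow> mat2_cong (cat_matpow p q (a - b)) (1,0,0,1) m"
  by (simp add: mat2_cong_id_iff_fixes fixes_mod_cat_matpow_diff)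

lemma cat_cong_id_mult:
  "mat2_cong (cat_matpow p q a) (1,0,0,1) m \<Longrightarrow> mat2_cong (cat_matpow p q (a * k)) (1,0,0,1) m"
  by (simp add: mat2_cong_id_iff_fixes fixes_mod_cat_matpow_mult)

lemma cat_cong_id_dvd:
  "m dvd k \<Longrightarrow> mat2_cong (cat_matpow p q a) (1,0,0,1) k \<Longrightarrow> mat2_cong (cat_matpow p q a) (1,0,0,1) m"
  by (auto simp: mat2_cong_id_iff_fixes intro: fixes_mod_dvd)

lemma T1_cases: "T1 p q = 1 \<or> T1 p q = 2 \<or> T1 p q = 3"
  by (simp add: T1_def)

lemma T1_pos: "T1 p q \<ge> 1"
  by (simp add: T1_def)

lemma cat_cong_id_T1: "mat2_cong (cat_matpow p q (T1 p q)) (1,0,0,1) 2"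
proof -
  consider "odd p" "odd q" | "odd p \<noteq> odd q" | "even p" "even q" by blast
  then show ?thesis
  proof cases
    case 1
    then have "T1 p q = 3" "even (3 + p*q)" by (simp_all add: T1_def)
    then show ?thesis by (simp add: mat2_cong_id_iff[OF cat_matpow_3])
  next
    case 2
    then have "T1 p q = 2" "even (p*q)" by (auto simp: T1_def)
    with 2 show ?thesis by (auto simp: mat2_cong_id_iff[OF cat_matpow_2])
  next
    case 3
    then have "T1 p q = 1" by (simp add: T1_def)
    with 3 show ?thesis by (simp only: mat2_cong_id_iff[OF cat_matpow_1]) simp
  qed
qed

lemma T1_le_of_cat_cong_id_2:
  assumes "1 \<le> j" and cong: "mat2_cong (cat_matpow p q j) (1,0,0,1) 2"
  shows "T1 p q \<le> j"
proof (rule ccontr)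
  assume "\<not> T1 p q \<le> j"
  with assms(1) T1_cases[of p q] have "j = 1 \<and> T1 p q \<ge> 2 \<or> j = 2 \<and> T1 p q = 3" by auto
  then show False
  proof
    assume "j = 1 \<and> T1 p q \<ge> 2"
    with cong have "even p" "even q" "T1 p q \<ge> 2"
      by (simp_all only: mat2_cong_id_iff[OF cat_matpow_1])
    then show False by (simp add: T1_def)
  next
    assume "j = 2 \<and> T1 p q = 3"
    with cong show False by (auto simp: mat2_cong_id_iff[OF cat_matpow_2] T1_def split: if_splits)
  qed
qed

lemma cat_cong_id_2_iff: "mat2_cong (cat_matpow p q n) (1,0,0,1) 2 \<longleftrightarrow> T1 p q dvd n"
proof
  assume "mat2_cong (cat_matpow p q n) (1,0,0,1) 2"
  then show "T1 p q dvd n"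
    using cat_cong_id_diff cat_cong_id_T1 T1_pos T1_le_of_cat_cong_id_2
    by (rule dvd_of_diff_closed[where P = "\<lambda>n. mat2_cong (cat_matpow p q n) (1,0,0,1) 2"])
next
  assume "T1 p q dvd n"
  then show "mat2_cong (cat_matpow p q n) (1,0,0,1) 2"
    by (auto intro: cat_cong_id_mult[OF cat_cong_id_T1])
qed

lemma cat_cong_id_T1_pow2: "mat2_cong (cat_matpow p q (T1 p q * 2^f)) (1,0,0,1) (2^f)"
proof (induction f)
  case 0
  then show ?case by (simp add: mat2_cong_def)
next
  case (Suc f)
  have X2: "mat2_cong (cat_matpow p q (T1 p q * 2^f)) (1,0,0,1) 2"
    by (simp add: cat_cong_id_2_iff)
  have "T1 p q * 2 ^ Suc f = 2 * (T1 p q * 2^f)" by simp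
  then have "fixes_mod (2 ^ Suc f) (cat_matpow p q (T1 p q * 2 ^ Suc f)) u" for u
    using fixes_mod_square[OF X2] Suc unfolding mat2_cong_id_iff_fixes
    by (simp only: cat_matpow_double)
  then show ?case unfolding mat2_cong_id_iff_fixes by blast
qed

lemma cat_fixes_mod_2_even:
  assumes "odd p" "odd q" "\<not> 3 dvd n" and fixed: "fixes_mod 2 (cat_matpow p q n) w"
  shows "even (fst w) \<and> even (snd w)"
proof -
  obtain x y where w: "w = (x,y)" by (cases w) auto
  have "T1 p q = 3" using assms by (simp add: T1_def)
  then have "mat2_cong (cat_matpow p q (3 * (n div 3))) (1,0,0,1) 2"
    by (simp add: cat_cong_id_2_iff)
  then have "fixes_mod 2 (cat_matpow p q (3 * (n div 3))) w"
    unfolding mat2_cong_id_iff_fixes by blast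
  with fixed have "fixes_mod 2 (cat_matpow p q (n mod 3)) w"
    using fixes_mod_cat_matpow_diff[of 2 p q n w "3 * (n div 3)"] by (simp add: minus_mult_div_eq_mod)
  moreover have "n mod 3 = 1 \<or> n mod 3 = 2" using assms(3) by presburger
  ultimately consider "fixes_mod 2 (cat_matpow p q 1) (x,y)" | "fixes_mod 2 (cat_matpow p q 2) (x,y)"
    using w by auto
  then show ?thesis
  proof cases
    case 1
    have "1*x + p*y - x = p*y" "q*x + (1 + p*q)*y - y = q*x + p*q*y" by algebra+
    with 1 have "even (p*y)" "even (q*x + p*q*y)"
      unfolding fixes_mod_iff[OF cat_matpow_1 refl] by simp_all
    with assms(1,2) show ?thesis by (simp add: w)
  next
    case 2
    have "(1 + p*q)*x + p*(2 + p*q)*y - x = p*(q*x + (2 + p*q)*y)"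
      "q*(2 + p*q)*x + (1 + p*q*(3 + p*q))*y - y = q*(2 + p*q)*x + p*q*(3 + p*q)*y"
      by algebra+
    with 2 have A: "even (p*(q*x + (2 + p*q)*y))" and B: "even (q*(2 + p*q)*x + p*q*(3 + p*q)*y)"
      unfolding fixes_mod_iff[OF cat_matpow_2 refl] by simp_all
    from assms(1,2) have "even (p*q*(3 + p*q)*y)" by simp
    with B have "even (q*(2 + p*q)*x)" by simp
    with assms(1,2) have "even x" by simp
    with A assms(1,2) have "even y" by simp
    with \<open>even x\<close> show ?thesis by (simp add: w)
  qed
qed

section \<open>Periods modulo powers of 2\<close>

lemma T1_mult_pow2_of_dvd:
  assumes "T1 p q dvd t" "t dvd T1 p q * 2^f"
  shows "\<exists>i. t = T1 p q * 2^i"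
proof -
  obtain k where k: "t = T1 p q * k" using assms(1) by blast
  with assms(2) T1_pos[of p q] have "k dvd 2^f" by simp
  then obtain i where "k = 2^i" using divides_primepow_nat[OF two_is_prime_nat] by blast
  with k show ?thesis by blast
qed

definition vec_period :: "int \<Rightarrow> int \<Rightarrow> nat \<Rightarrow> int \<times> int \<Rightarrow> nat" where
  "vec_period p q f u = (LEAST n. n \<ge> 1 \<and> fixes_mod (2^f) (cat_matpow p q n) u)"

lemma vec_period_least:
  shows vec_period_pos: "vec_period p q f u \<ge> 1"
    and fixes_mod_vec_period: "fixes_mod (2^f) (cat_matpow p q (vec_period p q f u)) u"
    and vec_period_le: "\<And>j. 1 \<le> j \<Longrightarrow> fixes_mod (2^f) (cat_matpow p q j) u \<Longrightarrow> vec_period p q f u \<le> j"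
proof -
  have "fixes_mod (2^f) (cat_matpow p q (T1 p q * 2^f)) u"
    using cat_cong_id_T1_pow2[of p q f] by (simp only: mat2_cong_id_iff_fixes)
  note least = Least_pos[where P = "\<lambda>n. fixes_mod (2^f) (cat_matpow p q n) u", OF this,
      unfolded vec_period_def[symmetric]]
  from least T1_pos[of p q] show "vec_period p q f u \<ge> 1"
    "fixes_mod (2^f) (cat_matpow p q (vec_period p q f u)) u"
    "\<And>j. 1 \<le> j \<Longrightarrow> fixes_mod (2^f) (cat_matpow p q j) u \<Longrightarrow> vec_period p q f u \<le> j"
    by simp_all
qed

lemma vec_period_dvd_iff: "vec_period p q f u dvd n \<longleftrightarrow> fixes_mod (2^f) (cat_matpow p q n) u"
proof
  assume "vec_period p q f u dvd n"
  then obtain k where "n = vec_period p q f u * k" by blast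
  then show "fixes_mod (2^f) (cat_matpow p q n) u"
    using fixes_mod_cat_matpow_mult[OF fixes_mod_vec_period] by simp
next
  assume "fixes_mod (2^f) (cat_matpow p q n) u"
  then show "vec_period p q f u dvd n"
    using fixes_mod_cat_matpow_diff fixes_mod_vec_period vec_period_pos vec_period_le
    by (rule dvd_of_diff_closed[where P = "\<lambda>n. fixes_mod (2^f) (cat_matpow p q n) u"])
qed

lemma vec_period_dvd_T1_pow2: "vec_period p q f u dvd T1 p q * 2^f"
  using cat_cong_id_T1_pow2[of p q f] by (simp only: vec_period_dvd_iff mat2_cong_id_iff_fixes)

lemma vec_period_dvd_Suc: "vec_period p q f u dvd vec_period p q (Suc f) u"
  by (simp add: vec_period_dvd_iff fixes_mod_dvd[OF _ fixes_mod_vec_period])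

lemma vec_period_vec_mod: "vec_period p q e (vec_mod (2^e) u) = vec_period p q e u"
proof -
  have "vec_cong (2^e) (vec_mod (2^e) u) u" by (simp add: vec_cong_iff_vec_mod vec_mod_def)
  then show ?thesis by (simp add: vec_period_def fixes_mod_vec_cong)
qed

lemma vec_period_cases: "vec_period p q f u = 1 \<or> (\<exists>j. vec_period p q f u = T1 p q * 2^j)"
proof -
  define t where "t = vec_period p q f u"
  have t_dvd: "t dvd T1 p q * 2^f" unfolding t_def by (rule vec_period_dvd_T1_pow2)
  consider "T1 p q = 1" | "T1 p q = 2" | "T1 p q = 3" using T1_cases by blast
  then have "t = 1 \<or> (\<exists>j. t = T1 p q * 2^j)"
  proof cases
    case 1
    then show ?thesis using T1_mult_pow2_of_dvd[OF _ t_dvd] by simp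
  next
    case 2
    then have "t dvd 2 ^ Suc f" using t_dvd by simp
    then obtain i where "t = 2^i" using divides_primepow_nat[OF two_is_prime_nat] by blast
    with 2 show ?thesis by (cases i) auto
  next
    case 3
    show ?thesis
    proof (cases "3 dvd t")
      case True
      with 3 show ?thesis using T1_mult_pow2_of_dvd[OF _ t_dvd] by simp
    next
      case False
      \<comment> \<open>then \<open>C\<^sup>t - I\<close> is invertible modulo 2, so \<open>u \<equiv> 0\<close> and already \<open>C\<close> fixes \<open>u\<close>\<close>
      from 3 have "odd p" "odd q" by (auto simp: T1_def split: if_splits)
      then have "\<And>w. fixes_mod 2 (cat_matpow p q t) w \<Longrightarrow> even (fst w) \<and> even (snd w)"
        using cat_fixes_mod_2_even False by blast
      then have "2^f dvd fst u \<and> 2^f dvd snd u"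
        using fixes_mod_pow2_zero fixes_mod_vec_period unfolding t_def by blast
      then have "fixes_mod (2^f) (cat_matpow p q 1) u" by (simp add: fixes_mod_of_dvd)
      then have "t \<le> 1" unfolding t_def by (simp add: vec_period_le)
      then show ?thesis using vec_period_pos[of p q f u] unfolding t_def by simp
    qed
  qed
  then show ?thesis unfolding t_def .
qed

lemma vec_period_Suc_dvd:
  assumes "T1 p q dvd n" "vec_period p q f u dvd n"
  shows "vec_period p q (Suc f) u dvd 2 * n"
proof -
  have "mat2_cong (cat_matpow p q n) (1,0,0,1) 2" using assms(1) by (simp add: cat_cong_id_2_iff)
  moreover have "fixes_mod (2^f) (cat_matpow p q n) u" using assms(2) by (simp add: vec_period_dvd_iff)
  ultimately have "fixes_mod (2 ^ Suc f) (cat_matpow p q (2 * n)) u"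
    unfolding cat_matpow_double by (rule fixes_mod_square)
  then show ?thesis by (simp add: vec_period_dvd_iff)
qed

lemma cat_period_least:
  shows cat_period_pos: "cat_period p q s \<ge> 1"
    and cat_cong_id_cat_period: "mat2_cong (cat_matpow p q (cat_period p q s)) (1,0,0,1) (2^s)"
    and cat_period_le: "\<And>j. 1 \<le> j \<Longrightarrow> mat2_cong (cat_matpow p q j) (1,0,0,1) (2^s) \<Longrightarrow> cat_period p q s \<le> j"
  using Least_pos[where P = "\<lambda>n. mat2_cong (cat_matpow p q n) (1,0,0,1) (2^s)",
      OF cat_cong_id_T1_pow2[of p q s], unfolded cat_period_def[symmetric]] T1_pos[of p q]
  by simp_all

lemma cat_period_dvd_iff: "cat_period p q s dvd n \<longleftrightarrow> mat2_cong (cat_matpow p q n) (1,0,0,1) (2^s)"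
proof
  assume "cat_period p q s dvd n"
  then obtain k where "n = cat_period p q s * k" by blast
  then show "mat2_cong (cat_matpow p q n) (1,0,0,1) (2^s)"
    using cat_cong_id_mult[OF cat_cong_id_cat_period] by simp
next
  assume "mat2_cong (cat_matpow p q n) (1,0,0,1) (2^s)"
  then show "cat_period p q s dvd n"
    using cat_cong_id_diff cat_cong_id_cat_period cat_period_pos cat_period_le
    by (rule dvd_of_diff_closed[where P = "\<lambda>n. mat2_cong (cat_matpow p q n) (1,0,0,1) (2^s)"])
qed

lemma cat_period_eq_T1_pow2:
  assumes "s \<ge> 1" shows "\<exists>i. cat_period p q s = T1 p q * 2^i"
proof (rule T1_mult_pow2_of_dvd)
  have "mat2_cong (cat_matpow p q (cat_period p q s)) (1,0,0,1) 2"
    using cat_cong_id_dvd[OF _ cat_cong_id_cat_period] assms by (simp add: dvd_power)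
  then show "T1 p q dvd cat_period p q s" by (simp add: cat_cong_id_2_iff)
  show "cat_period p q s dvd T1 p q * 2^s" by (simp add: cat_period_dvd_iff cat_cong_id_T1_pow2)
qed

section \<open>The quantities \<open>G\<^sub>n\<close>, \<open>H\<^sub>n\<close> and \<open>e\<^sub>s\<close>\<close>

lemma lucas_closed_forms:
  fixes A B :: real
  assumes B: "B\<^sup>2 = A\<^sup>2 - 4"
  shows "((A + B)/2)^2 + ((A - B)/2)^2 = A^2 - 2"
    and "((A + B)/2)^3 + ((A - B)/2)^3 = A^3 - 3*A"
    and "B \<noteq> 0 \<Longrightarrow> (1/B) * (((A + B)/2)^2 - ((A - B)/2)^2) = A"
    and "B \<noteq> 0 \<Longrightarrow> (1/B) * (((A + B)/2)^3 - ((A - B)/2)^3) = A^2 - 1"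
proof -
  have "((A + B)/2)^2 + ((A - B)/2)^2 = (A^2 + B^2)/2"
    by (simp add: power2_eq_square field_simps)
  then show "((A + B)/2)^2 + ((A - B)/2)^2 = A^2 - 2" using B by simp
  have "((A + B)/2)^3 + ((A - B)/2)^3 = (A^3 + 3*A*B^2)/4"
    by (simp add: power2_eq_square power3_eq_cube field_simps)
  also have "\<dots> = (A^3 + 3*A*(A^2 - 4))/4" using B by simp
  finally show "((A + B)/2)^3 + ((A - B)/2)^3 = A^3 - 3*A"
    by (simp add: field_simps power2_eq_square power3_eq_cube)
  assume "B \<noteq> 0"
  then show "(1/B) * (((A + B)/2)^2 - ((A - B)/2)^2) = A"
    by (simp add: field_simps power2_eq_square)
  have "((A + B)/2)^3 - ((A - B)/2)^3 = B * (3*A^2 + B^2)/4"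
    by (simp add: power2_eq_square power3_eq_cube field_simps)
  with \<open>B \<noteq> 0\<close> have "(1/B) * (((A + B)/2)^3 - ((A - B)/2)^3) = (3*A^2 + B^2)/4" by simp
  also have "\<dots> = (3*A^2 + (A^2 - 4))/4" using B by simp
  also have "\<dots> = A^2 - 1" by (simp add: field_simps)
  finally show "(1/B) * (((A + B)/2)^3 - ((A - B)/2)^3) = A^2 - 1" .
qed

lemma catB:
  assumes "p > 0" "q > 0"
  shows catB_square: "(catB p q)\<^sup>2 = (of_int (catA p q))\<^sup>2 - 4" and catB_nonzero: "catB p q \<noteq> 0"
proof -
  from assms have "p * q > 0" by simp
  then have "catA p q \<ge> 3" by (simp add: catA_def)
  then have "(of_int (catA p q) :: real) \<ge> 3" by simp
  then have "(of_int (catA p q) :: real)\<^sup>2 \<ge> 3\<^sup>2" by (rule power_mono) simp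
  then have pos: "(of_int (catA p q) :: real)\<^sup>2 - 4 > 0" by simp
  then show "(catB p q)\<^sup>2 = (of_int (catA p q))\<^sup>2 - 4" by (simp add: catB_def)
  from pos show "catB p q \<noteq> 0" by (simp add: catB_def)
qed

lemma catG_1: "catG p q 1 = catA p q"
proof -
  have "(of_int (catA p q) + catB p q)/2 + (of_int (catA p q) - catB p q)/2 = of_int (catA p q)"
    by (simp add: field_simps)
  then show ?thesis unfolding catG_def by (simp only: power_one_right floor_of_int)
qed

lemma catG_2: assumes "p > 0" "q > 0" shows "catG p q 2 = (catA p q)^2 - 2"
proof -
  have "((of_int (catA p q) + catB p q)/2)^2 + ((of_int (catA p q) - catB p q)/2)^2
        = of_int ((catA p q)^2 - 2)"
    using lucas_closed_forms(1)[OF catB_square[OF assms]] by simp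
  then show ?thesis unfolding catG_def by (simp only: floor_of_int)
qed

lemma catG_3: assumes "p > 0" "q > 0" shows "catG p q 3 = (catA p q)^3 - 3 * catA p q"
proof -
  have "((of_int (catA p q) + catB p q)/2)^3 + ((of_int (catA p q) - catB p q)/2)^3
        = of_int ((catA p q)^3 - 3 * catA p q)"
    using lucas_closed_forms(2)[OF catB_square[OF assms]] by simp
  then show ?thesis unfolding catG_def by (simp only: floor_of_int)
qed

lemma catH_2: assumes "p > 0" "q > 0" shows "catH p q 2 = catA p q"
proof -
  have "(1 / catB p q) * (((of_int (catA p q) + catB p q)/2)^2 - ((of_int (catA p q) - catB p q)/2)^2)
        = of_int (catA p q)"
    using lucas_closed_forms(3)[OF catB_square[OF assms] catB_nonzero[OF assms]] by simp
  then show ?thesis unfolding catH_def by (simp only: floor_of_int)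
qed

lemma catH_3: assumes "p > 0" "q > 0" shows "catH p q 3 = (catA p q)^2 - 1"
proof -
  have "(1 / catB p q) * (((of_int (catA p q) + catB p q)/2)^3 - ((of_int (catA p q) - catB p q)/2)^3)
        = of_int ((catA p q)^2 - 1)"
    using lucas_closed_forms(4)[OF catB_square[OF assms] catB_nonzero[OF assms]] by simp
  then show ?thesis unfolding catH_def by (simp only: floor_of_int)
qed

lemma catG_T1:
  assumes "p > 0" "q > 0" shows "catG p q (T1 p q) = mat2_tr (cat_matpow p q (T1 p q))"
proof -
  have tr1: "mat2_tr (cat_matpow p q 1) = catA p q"
    by (simp only: cat_matpow_1) (simp add: mat2_tr_def catA_def)
  have "mat2_tr (cat_matpow p q 2) = (catA p q)^2 - 2"
    using tr_cat_matpow_double[of p q 1] unfolding mult_1_right tr1 .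
  moreover have "mat2_tr (cat_matpow p q 3) = (catA p q)^3 - 3 * catA p q"
    by (simp add: cat_matpow_3 mat2_tr_def catA_def power3_eq_cube algebra_simps)
  ultimately show ?thesis
    using T1_cases[of p q] tr1 catG_1 catG_2[OF assms] catG_3[OF assms] by auto
qed

lemma tr_cat_matpow_T1_mod8:
  assumes "p > 0" "q > 0" "m0 p q = 0"
  shows "mat2_tr (cat_matpow p q (T1 p q)) mod 8 = 2"
proof -
  obtain a b c d where X: "cat_matpow p q (T1 p q) = (a,b,c,d)" by (cases "cat_matpow p q (T1 p q)")
  define t where "t = mat2_tr (cat_matpow p q (T1 p q))"
  have "2 dvd a - 1" "2 dvd d - 1"
    using cat_cong_id_T1[of p q] unfolding mat2_cong_id_iff[OF X] by simp_all
  moreover have "t = a + d" by (simp add: t_def X mat2_tr_def)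
  ultimately have "even t" by presburger
  moreover have "(t div 2) mod 4 = 1"
    using assms(3) unfolding m0_def t_def catG_T1[OF assms(1,2)] by (simp split: if_splits)
  ultimately have "t mod 8 = 2" by presburger
  then show ?thesis by (simp add: t_def)
qed

lemma le_v2:
  assumes "x \<noteq> 0" "(2::int)^k dvd x" shows "k \<le> v2 x"
proof -
  have bound: "\<forall>y. (2::int)^y dvd x \<longrightarrow> y \<le> nat \<bar>x\<bar>"
  proof (intro allI impI)
    fix y assume "(2::int)^y dvd x"
    then have "\<bar>(2::int)^y\<bar> \<le> \<bar>x\<bar>" using assms(1) dvd_imp_le_int by blast
    then have "(2::int)^y \<le> \<bar>x\<bar>" by simp
    moreover have "int y < 2^y" using less_exp[of y] by (simp flip: of_nat_less_iff)
    ultimately show "y \<le> nat \<bar>x\<bar>" by linarith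
  qed
  show ?thesis
    unfolding v2_def using Greatest_le_nat[of "\<lambda>y. (2::int)^y dvd x" k "nat \<bar>x\<bar>"] assms(2) bound
    by blast
qed

lemma e_sh_hhat_ge:
  assumes p: "p > 0" and q: "q > 0"
  shows "int (e_sh p q) + hhat p q \<ge> 1"
proof -
  have "p * q > 0" using p q by simp
  then have A3: "catA p q \<ge> 3" by (simp add: catA_def)
  have v2_even: "v2 x \<ge> 1" if "x \<noteq> 0" "even x" for x
    using le_v2[of x 1] that by simp
  show ?thesis
  proof (cases "odd p \<and> odd q")
    case True
    then have T: "T1 p q = 3" and odd_A: "odd (catA p q)" by (simp_all add: T1_def catA_def)
    from odd_A obtain j where "catA p q = 2*j + 1" by (rule oddE)
    then have "(catA p q)^2 - 1 = 4 * (j * (j + 1))" by (simp add: power2_eq_square algebra_simps)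
    then have "4 dvd (catA p q)^2 - 1" by simp
    moreover have "(catA p q)^2 - 1 \<noteq> 0"
    proof -
      have "(catA p q)^2 \<ge> 3^2" using A3 by (intro power_mono) auto
      then show ?thesis by simp
    qed
    ultimately have "e_sh p q \<ge> 2"
      unfolding e_sh_def T catH_3[OF p q] using le_v2[of _ 2] by simp
    then show ?thesis by (simp add: hhat_def)
  next
    case False
    show ?thesis
    proof (cases "odd p \<or> odd q")
      case True
      with False have T: "T1 p q = 2" by (simp add: T1_def)
      from False True have "even (catA p q)" by (auto simp: catA_def)
      with A3 have "e_sh p q \<ge> 1" unfolding e_sh_def T catH_2[OF p q] using v2_even by simp
      moreover from False p q have "v2 p \<ge> 1 \<or> v2 q \<ge> 1" using v2_even[of p] v2_even[of q] by auto
      ultimately show ?thesis by (auto simp: hhat_def)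
    next
      case False
      with p q have "v2 p \<ge> 1" "v2 q \<ge> 1" using v2_even[of p] v2_even[of q] by auto
      then show ?thesis by (simp add: hhat_def)
    qed
  qed
qed

lemma e_s_ge:
  assumes "p > 0" "q > 0" shows "1 + m0 p q \<le> nat (e_s p q)"
proof -
  have "x0 p q \<ge> 0" by (simp add: x0_def)
  with e_sh_hhat_ge[OF assms] have "int (1 + m0 p q) \<le> e_s p q" by (simp add: e_s_def)
  then show ?thesis by (simp add: le_nat_iff)
qed

lemma tr_cat_matpow_mod8:
  assumes "p > 0" "q > 0" and s: "1 + m0 p q \<le> s"
    and g: "cat_period p q s dvd n" and n: "n = T1 p q * 2^k"
  shows "mat2_tr (cat_matpow p q n) mod 8 = 2"
proof (cases "s \<ge> 2")
  case True
  then have "(4::int) dvd 2^s" using le_imp_power_dvd[of 2 s "2::int"] by simp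
  with g have "mat2_cong (cat_matpow p q n) (1,0,0,1) 4"
    by (auto simp: cat_period_dvd_iff intro: cat_cong_id_dvd)
  then show ?thesis by (rule mat2_tr_mod8_of_cong4[OF det_cat_matpow])
next
  case False
  with s have "m0 p q = 0" by simp
  with assms(1,2) show ?thesis
    unfolding n by (rule tr_cat_matpow_double_mod8[OF tr_cat_matpow_T1_mod8])
qed

section \<open>Doubling of periods\<close>

lemma vec_period_Suc_eq_double:
  assumes "p > 0" "q > 0" and s: "1 + m0 p q \<le> s" and gt: "cat_period p q s < vec_period p q f u"
  shows "vec_period p q (Suc f) u = 2 * vec_period p q f u"
proof -
  define t where "t = vec_period p q f u"
  define t' where "t' = vec_period p q (Suc f) u"
  obtain i where g: "cat_period p q s = T1 p q * 2^i"
    using cat_period_eq_T1_pow2[of s p q] s by auto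
  from gt cat_period_pos[of p q s] have "t \<noteq> 1" by (simp add: t_def)
  then obtain j where tj: "t = T1 p q * 2^j" using vec_period_cases[of p q f u] by (auto simp: t_def)
  with gt g T1_pos[of p q] have "i < j" by (simp add: t_def)
  define n where "n = T1 p q * 2^(j - 1)"
  from \<open>i < j\<close> have tn: "t = 2 * n" by (cases j) (simp_all add: tj n_def)
  from \<open>i < j\<close> have "cat_period p q s dvd n" by (simp add: g n_def le_imp_power_dvd)
  then have tr: "mat2_tr (cat_matpow p q n) mod 8 = 2"
    using tr_cat_matpow_mod8[OF assms(1,2) s _ n_def] by blast
  have "T1 p q dvd t" by (simp add: tj)
  then have "t' dvd 2 * t" unfolding t'_def t_def by (rule vec_period_Suc_dvd) simp
  have "t dvd t'" by (simp add: t_def t'_def vec_period_dvd_Suc)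
  then obtain k where k: "t' = t * k" ..
  from \<open>t' dvd 2 * t\<close> have "t * k dvd t * 2" by (simp add: k mult.commute)
  moreover have "t > 0" using vec_period_pos[of p q f u] by (simp add: t_def)
  ultimately have "k dvd 2" by simp
  have "t' \<noteq> t"
  proof
    assume "t' = t"
    then have "fixes_mod (2 ^ Suc f) (mat2_mult (cat_matpow p q n) (cat_matpow p q n)) u"
      using fixes_mod_vec_period[of "Suc f" p q u] by (simp add: t'_def tn cat_matpow_double)
    moreover have "mat2_cong (cat_matpow p q n) (1,0,0,1) 2" by (simp add: cat_cong_id_2_iff n_def)
    ultimately have "fixes_mod (2^f) (cat_matpow p q n) u"
      using fixes_mod_square_cancel[OF det_cat_matpow _ tr] by blast
    moreover have "n \<ge> 1" using T1_pos[of p q] by (simp add: n_def)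
    ultimately have "t \<le> n" unfolding t_def by (rule vec_period_le[rotated])
    with tn vec_period_pos[of p q f u] show False by (simp add: t_def)
  qed
  with k have "k \<noteq> 1" by auto
  moreover from \<open>k dvd 2\<close> have "k \<le> 2" "k \<noteq> 0" by (auto dest: dvd_imp_le intro: gr0I)
  ultimately have "k = 2" by simp
  with k show ?thesis by (simp add: t_def t'_def)
qed

lemma vec_period_Suc_eq_double_iff:
  assumes "p > 0" "q > 0" and s: "1 + m0 p q \<le> s" and gt: "cat_period p q s < T"
  shows "vec_period p q (Suc f) u = 2 * T \<longleftrightarrow> vec_period p q f u = T"
proof
  assume "vec_period p q f u = T"
  with assms show "vec_period p q (Suc f) u = 2 * T" using vec_period_Suc_eq_double by simp
next
  assume T: "vec_period p q (Suc f) u = 2 * T"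
  show "vec_period p q f u = T"
  proof (cases "cat_period p q s < vec_period p q f u")
    case True
    with assms(1,2) s T show ?thesis using vec_period_Suc_eq_double by simp
  next
    case False
    obtain i where g: "cat_period p q s = T1 p q * 2^i"
      using cat_period_eq_T1_pow2[of s p q] s by auto
    have "vec_period p q f u dvd cat_period p q s"
    proof (cases "vec_period p q f u = 1")
      case False
      then obtain j where j: "vec_period p q f u = T1 p q * 2^j" using vec_period_cases by blast
      with \<open>\<not> cat_period p q s < vec_period p q f u\<close> g T1_pos[of p q] have "j \<le> i" by simp
      then show ?thesis by (simp add: g j le_imp_power_dvd)
    qed simp
    moreover have "T1 p q dvd cat_period p q s" by (simp add: g)
    ultimately have "2 * T dvd 2 * cat_period p q s" using vec_period_Suc_dvd T by metis
    then have "T \<le> cat_period p q s" using cat_period_pos[of p q s] by (simp add: dvd_imp_le)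
    with gt show ?thesis by simp
  qed
qed

section \<open>Cycles of the Cat map\<close>

lemma div_mem_01:
  fixes a M :: int assumes "M > 0" "0 \<le> a" "a < 2 * M" shows "a div M \<in> {0, 1}"
proof -
  have "a div M < 2"
  proof (rule ccontr)
    assume "\<not> a div M < 2"
    then have "M * 2 \<le> M * (a div M)" using assms(1) by (intro mult_left_mono) auto
    moreover have "M * (a div M) + a mod M = a" by (rule mult_div_mod_eq)
    moreover have "a mod M \<ge> 0" using assms(1) by simp
    ultimately show False using assms(3) by linarith
  qed
  moreover have "a div M \<ge> 0" using assms by (simp add: pos_imp_zdiv_nonneg_iff)
  ultimately show ?thesis by auto
qed

lemma vec_mod_cat_space: "u \<in> cat_space e \<Longrightarrow> vec_mod (2^e) u = u"
  by (cases u) (simp add: cat_space_def vec_mod_def)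

lemma vec_mod_in_cat_space: "vec_mod (2^e) u \<in> cat_space e"
  by (simp add: cat_space_def vec_mod_def)

lemma cat_map_eq: "cat_map p q e u = vec_mod (2^e) (mat2_apply (cat_mat p q) u)"
  by (cases u) (simp add: cat_map_def vec_mod_def mat2_apply_def cat_mat_def)

lemma funpow_cat_map:
  assumes "u \<in> cat_space e"
  shows "(cat_map p q e ^^ n) u = vec_mod (2^e) (mat2_apply (cat_matpow p q n) u)"
proof (induction n)
  case 0
  then show ?case using vec_mod_cat_space[OF assms] by simp
next
  case (Suc n)
  then show ?case by (simp add: cat_map_eq vec_mod_mat2_apply mat2_apply_mult)
qed

lemma funpow_cat_map_fixed_iff:
  assumes "u \<in> cat_space e"
  shows "(cat_map p q e ^^ n) u = u \<longleftrightarrow> fixes_mod (2^e) (cat_matpow p q n) u"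
  using vec_mod_cat_space[OF assms]
  by (simp add: funpow_cat_map[OF assms] fixes_mod_def vec_cong_iff_vec_mod)

lemma point_period_eq_vec_period:
  "u \<in> cat_space e \<Longrightarrow> point_period p q e u = vec_period p q e u"
  by (simp add: point_period_def vec_period_def funpow_cat_map_fixed_iff)

lemma cat_map_periodic:
  assumes "u \<in> cat_space e" shows "\<exists>n>0. (cat_map p q e ^^ n) u = u"
proof -
  have "fixes_mod (2^e) (cat_matpow p q (T1 p q * 2^e)) u"
    using cat_cong_id_T1_pow2[of p q e] unfolding mat2_cong_id_iff_fixes by blast
  with T1_pos[of p q] show ?thesis
    by (intro exI[of _ "T1 p q * 2^e"]) (simp add: funpow_cat_map_fixed_iff[OF assms])
qed

lemma num_cycles_eq: "Tc * num_cycles p q Tc e = card {v \<in> cat_space e. vec_period p q e v = Tc}"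
proof -
  let ?f = "cat_map p q e"
  define Y where "Y = {v \<in> cat_space e. vec_period p q e v = Tc}"
  have orbit: "cat_orbit p q e v = orbit ?f v" if v: "v \<in> cat_space e" for v
  proof -
    obtain n where "n > 0" "(?f ^^ n) v = v" using cat_map_periodic[OF v] by blast
    then have "v \<in> orbit ?f v" by (intro self_in_orbit_of_funpow)
    then show ?thesis unfolding cat_orbit_def by (rule orbit_altdef_self_in[symmetric])
  qed
  have period: "point_period p q e v = least_period ?f v" for v
    by (simp add: point_period_def least_period_def)
  have Y: "Y = {v \<in> cat_space e. least_period ?f v = Tc}"
    using point_period_eq_vec_period by (auto simp: Y_def period[symmetric])
  have "{v \<in> cat_space e. point_period p q e v = Tc} = Y"
    using point_period_eq_vec_period by (auto simp: Y_def)
  moreover have "{cat_orbit p q e v | v. v \<in> cat_space e \<and> point_period p q e v = Tc}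
      = cat_orbit p q e ` {v \<in> cat_space e. point_period p q e v = Tc}" by blast
  ultimately have "{cat_orbit p q e v | v. v \<in> cat_space e \<and> point_period p q e v = Tc}
      = cat_orbit p q e ` Y" by simp
  also have "\<dots> = orbit ?f ` Y" using orbit by (auto simp: Y_def)
  finally have "num_cycles p q Tc e = card (orbit ?f ` Y)" by (simp add: num_cycles_def)
  moreover have "Tc * card (orbit ?f ` Y) = card Y"
    unfolding Y
  proof (rule card_least_period_points)
    show "finite (cat_space e)" by (simp add: cat_space_def)
    show "?f v \<in> cat_space e" for v by (simp add: cat_map_eq vec_mod_in_cat_space)
  qed (rule cat_map_periodic)
  ultimately show ?thesis by (simp add: Y_def)
qed

lemma bij_betw_cat_space_Suc:
  fixes e :: nat and M :: int
  defines "M \<equiv> 2^e"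
  shows "bij_betw (\<lambda>((x,y),(i,j)). (x + i*M, y + j*M))
           (cat_space e \<times> ({0,1} \<times> {0,1})) (cat_space (Suc e))"
proof (rule bij_betw_byWitness[where f' = "\<lambda>u. (vec_mod M u, (fst u div M, snd u div M))"])
  have M: "M > 0" "(2::int) ^ Suc e = 2 * M" by (simp_all add: M_def)
  have digits: "(x + i*M) mod M = x" "(x + i*M) div M = i" if "0 \<le> x" "x < M" for x i
    using that M(1) by simp_all
  show "\<forall>z \<in> cat_space e \<times> ({0,1} \<times> {0,1}).
          (\<lambda>u. (vec_mod M u, (fst u div M, snd u div M))) ((\<lambda>((x,y),(i,j)). (x + i*M, y + j*M)) z) = z"
    by (auto simp: cat_space_def vec_mod_def digits M_def)
  show "\<forall>u \<in> cat_space (Suc e).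
          (\<lambda>((x,y),(i,j)). (x + i*M, y + j*M)) ((\<lambda>u. (vec_mod M u, (fst u div M, snd u div M))) u) = u"
    by (auto simp: vec_mod_def mult.commute)
  show "(\<lambda>((x,y),(i,j)). (x + i*M, y + j*M)) ` (cat_space e \<times> ({0,1} \<times> {0,1})) \<subseteq> cat_space (Suc e)"
    using M by (auto simp: cat_space_def M_def)
  show "(\<lambda>u. (vec_mod M u, (fst u div M, snd u div M))) ` cat_space (Suc e) \<subseteq> cat_space e \<times> ({0,1} \<times> {0,1})"
  proof
    fix z assume "z \<in> (\<lambda>u. (vec_mod M u, (fst u div M, snd u div M))) ` cat_space (Suc e)"
    then obtain a b where u: "(a,b) \<in> cat_space (Suc e)" and z: "z = (vec_mod M (a,b), (a div M, b div M))"
      by auto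
    from u have ab: "0 \<le> a" "a < 2*M" "0 \<le> b" "b < 2*M" by (simp_all add: cat_space_def M_def)
    from ab have "a div M \<in> {0,1}" "b div M \<in> {0,1}" using div_mem_01[OF M(1)] by blast+
    with M(1) show "z \<in> cat_space e \<times> ({0,1} \<times> {0,1})"
      by (simp add: z vec_mod_def cat_space_def flip: M_def) blast
  qed
qed

lemma card_cat_space_Suc:
  "card {u \<in> cat_space (Suc e). P (vec_mod (2^e) u)} = 4 * card {v \<in> cat_space e. P v}"
proof -
  define M :: int where "M = 2^e"
  define h where "h = (\<lambda>((x,y),(i,j)). (x + i*M, y + j*M))"
  define D where "D = cat_space e \<times> ({0::int,1} \<times> {0::int,1})"
  have bij: "bij_betw h D (cat_space (Suc e))"
    unfolding h_def D_def M_def by (rule bij_betw_cat_space_Suc)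
  have h_D: "h ` D = cat_space (Suc e)" using bij by (simp add: bij_betw_def)
  have vec_mod_h: "vec_mod M (h z) = fst z" if "z \<in> D" for z
    using that by (auto simp: h_def D_def cat_space_def vec_mod_def M_def)
  have "{u \<in> cat_space (Suc e). P (vec_mod M u)} = h ` {z \<in> D. P (fst z)}"
  proof (intro equalityI subsetI)
    fix u assume "u \<in> {u \<in> cat_space (Suc e). P (vec_mod M u)}"
    moreover from this obtain z where "z \<in> D" "u = h z" by (auto simp flip: h_D)
    ultimately show "u \<in> h ` {z \<in> D. P (fst z)}" using vec_mod_h by auto
  next
    fix u assume "u \<in> h ` {z \<in> D. P (fst z)}"
    then show "u \<in> {u \<in> cat_space (Suc e). P (vec_mod M u)}" using h_D vec_mod_h by auto
  qed
  moreover have "inj_on h {z \<in> D. P (fst z)}"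
    using bij by (auto simp: bij_betw_def intro: inj_on_subset)
  moreover have "{z \<in> D. P (fst z)} = {v \<in> cat_space e. P v} \<times> ({0::int,1} \<times> {0::int,1})"
    by (auto simp: D_def)
  moreover have "finite {v \<in> cat_space e. P v}" by (simp add: cat_space_def)
  ultimately show ?thesis by (simp add: card_image card_cartesian_product M_def)
qed

theorem theorem3:
  fixes p q :: int and e Tc :: nat
  assumes "p > 0" and "q > 0" and "e > 0"
    and "Tc > cat_period p q (nat (e_s p q))"
  shows "2 * num_cycles p q Tc e = num_cycles p q (2 * Tc) (e + 1)"
proof -
  have s: "1 + m0 p q \<le> nat (e_s p q)" using e_s_ge assms(1,2) .
  have period: "vec_period p q (Suc e) u = 2 * Tc \<longleftrightarrow> vec_period p q e (vec_mod (2^e) u) = Tc" for u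
    using vec_period_Suc_eq_double_iff[OF assms(1,2) s assms(4)] by (simp add: vec_period_vec_mod)
  have "2 * Tc * num_cycles p q (2 * Tc) (Suc e)
      = card {u \<in> cat_space (Suc e). vec_period p q (Suc e) u = 2 * Tc}"
    by (simp add: num_cycles_eq)
  also have "\<dots> = card {u \<in> cat_space (Suc e). vec_period p q e (vec_mod (2^e) u) = Tc}"
    by (simp add: period)
  also have "\<dots> = 4 * card {v \<in> cat_space e. vec_period p q e v = Tc}"
    by (rule card_cat_space_Suc)
  also have "\<dots> = 2 * Tc * (2 * num_cycles p q Tc e)"
    using num_cycles_eq[of Tc p q e] by simp
  finally show ?thesis using assms(4) by simp
qed

end
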